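(* Let $q>5$ be a prime power which cannot be written as $2^p$ with $p$ prime. Then, for any generator $w$ of $\mathbb F_q^*$, the group $G(q)$ contains the permutation of $\mathbb F_q^*$ induced by $c\mapsto wc$, which is a $(q-1)$-cycle.
   Context: $\mathbb F_q$ is the field with $q$ elements, $\mathbb F_q^*$ its multiplicative group. $G(q)$ denotes the group of permutations of $\mathbb F_q^*$ generated by all permutations of $\mathbb F_q^*$ which can be represented as $c\mapsto ac^m+bc^n$ with $a,b\in\mathbb F_q^*$ and integers $0<m<n<q$. *)

theory Defs
  imports "HOL-Algebra.Bij" "HOL-Algebra.Generated_Groups" "HOL-Computational_Algebra.Primes"
begin

definition Fstar :: "'a::field set" where
  "Fstar = UNIV - {0}"

text \<open>Permutations of F_q^* are represented as
  elements of Bij Fstar (bijections of Fstar, extensional outside Fstar).\<close>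
definition binomial_perms :: "('a::{field,finite} \<Rightarrow> 'a) set" where
  "binomial_perms = {f \<in> Bij Fstar. \<exists>a b (m::nat) (n::nat). a \<noteq> 0 \<and> b \<noteq> 0 \<and> 0 < m \<and> m < n
      \<and> n < card (UNIV :: 'a set) \<and> f = restrict (\<lambda>c. a * c ^ m + b * c ^ n) Fstar}"

definition Gq :: "('a::{field,finite} \<Rightarrow> 'a) set" where
  "Gq = generate (BijGroup Fstar) binomial_perms"

definition is_generator :: "'a::field \<Rightarrow> bool" where
  "is_generator w \<longleftrightarrow> w \<noteq> 0 \<and> {w ^ k | k. True} = Fstar"

end

theory Submission
  imports Defs "HOL-Number_Theory.Residues"
begin

text \<open>If a binomial \<open>f\<close> permutes \<open>\<F>\<^sub>q\<^sup>*\<close>, then so does the binomial \<open>w f\<close>, hence \<open>G(q)\<close>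
  contains \<open>(w f) \<circ> f\<^sup>-\<^sup>1\<close>, which is \<open>c \<mapsto> w c\<close>; so one permutation binomial suffices.
  For odd \<open>q = 2h + 1\<close> take \<open>a c + c\<^sup>h\<^sup>+\<^sup>1 = c (a + c\<^sup>h)\<close> with \<open>(a + 1)/(a - 1) = w\<^sup>2\<close>: as
  \<open>c\<^sup>h = \<plusminus>1\<close>, two points with the same image and different signs \<open>c\<^sup>h\<close> would differ by the
  square factor \<open>w\<^sup>2\<close>, which does not change \<open>c\<^sup>h\<close>. For \<open>q = p\<^sup>k\<close> with \<open>k\<close> composite, take
  \<open>c\<^sup>e - w c\<close> with \<open>e = p\<^sup>d\<close> for a proper divisor \<open>d > 1\<close> of \<open>k\<close>: it is additive, and has no
  nonzero root because \<open>w\<close> is not an \<open>(e - 1)\<close>-th power, \<open>e - 1\<close> being a divisor \<open>> 1\<close> of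
  \<open>q - 1\<close>. The hypotheses on \<open>q\<close> leave only these two cases. \<close>

lemma Fstar_iff [simp]: "x \<in> Fstar \<longleftrightarrow> x \<noteq> 0"
  unfolding Fstar_def by simp

lemma card_Fstar: "card (Fstar :: 'a::{field,finite} set) = card (UNIV :: 'a set) - 1"
  unfolding Fstar_def by (simp add: card_Diff_singleton)

lemma restrict_in_Bij_FstarI:
  fixes f :: "'a::{field,finite} \<Rightarrow> 'a"
  assumes "\<And>x. x \<noteq> 0 \<Longrightarrow> f x \<noteq> 0" and "inj_on f Fstar"
  shows "restrict f Fstar \<in> Bij Fstar"
proof -
  have "f ` Fstar \<subseteq> Fstar" using assms(1) by auto
  with assms(2) have "f ` Fstar = Fstar" by (intro endo_inj_surj) auto
  with assms(2) have "bij_betw f Fstar Fstar" by (simp add: bij_betw_def)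
  then show ?thesis unfolding Bij_def by simp
qed

lemma power_card_minus_one_eq_one:
  fixes x :: "'a::{field,finite}"
  assumes "x \<noteq> 0"
  shows "x ^ (card (UNIV :: 'a set) - 1) = 1"
proof -
  have "\<Prod>Fstar = (\<Prod>y\<in>Fstar. x * (y :: 'a))"
    by (rule prod.reindex_bij_witness[of _ "\<lambda>y. x * y" "\<lambda>y. y / x"]) (use assms in auto)
  also have "\<dots> = x ^ card (Fstar :: 'a set) * \<Prod>Fstar"
    by (simp only: prod.distrib prod_constant)
  finally have "1 * \<Prod>Fstar = x ^ card (Fstar :: 'a set) * \<Prod>(Fstar :: 'a set)"
    by simp
  moreover have "\<Prod>(Fstar :: 'a set) \<noteq> 0"
    unfolding Fstar_def by simp
  ultimately show ?thesis
    unfolding card_Fstar by (simp only: mult_cancel_right) simp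
qed

lemma is_generator_order_le:
  fixes w :: "'a::{field,finite}"
  assumes "is_generator w" and "0 < j" and "w ^ j = 1"
  shows "card (UNIV :: 'a set) - 1 \<le> j"
proof -
  have "Fstar \<subseteq> (\<lambda>k. w ^ k) ` {..<j}"
  proof
    fix x :: 'a assume "x \<in> Fstar"
    then obtain k where k: "x = w ^ k" using assms(1) unfolding is_generator_def by blast
    have "w ^ k = w ^ (j * (k div j) + k mod j)" by simp
    also have "\<dots> = (w ^ j) ^ (k div j) * w ^ (k mod j)" by (simp only: power_add power_mult)
    finally show "x \<in> (\<lambda>k. w ^ k) ` {..<j}" using k assms(2,3) by auto
  qed
  then have "card (Fstar :: 'a set) \<le> card ((\<lambda>k. w ^ k) ` {..<j})" by (intro card_mono) auto
  also have "\<dots> \<le> j" using card_image_le[of "{..<j}" "\<lambda>k. w ^ k"] by simp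
  finally show ?thesis by (simp add: card_Fstar)
qed

lemma is_generator_not_power:
  fixes w z :: "'a::{field,finite}"
  assumes "is_generator w" and "j dvd card (UNIV :: 'a set) - 1" and "1 < j"
  shows "w \<noteq> z ^ j"
proof
  assume w: "w = z ^ j"
  define N where "N = card (UNIV :: 'a set) - 1"
  obtain s where s: "N = j * s" using assms(2) unfolding N_def by blast
  have "card {0, 1 :: 'a} \<le> card (UNIV :: 'a set)" by (rule card_mono) auto
  then have "N > 0" by (simp add: N_def)
  with s assms(3) have "0 < s" "s < N" by auto
  have "z \<noteq> 0" using w assms(1,3) unfolding is_generator_def by auto
  have "w ^ s = z ^ N" by (simp add: w s flip: power_mult)
  also have "\<dots> = 1" unfolding N_def by (rule power_card_minus_one_eq_one[OF \<open>z \<noteq> 0\<close>])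
  finally have "w ^ s = 1" .
  with is_generator_order_le[OF assms(1) \<open>0 < s\<close>] \<open>s < N\<close> show False by (simp add: N_def)
qed

lemma prime_CHAR_finite_field: "prime CHAR('a::{field,finite})"
  by (intro prime_CHAR_semidom finite_imp_CHAR_pos) simp

lemma CHAR_eq_of_card_eq_prime_power:
  assumes "prime p" and "card (UNIV :: 'a::{field,finite} set) = p ^ k"
  shows "CHAR('a) = p"
proof -
  have "CHAR('a) dvd p ^ k" using CHAR_dvd_CARD[where 'a='a] assms(2) by simp
  with prime_CHAR_finite_field[where 'a='a] assms(1) show ?thesis
    by (simp add: prime_dvd_power primes_dvd_imp_eq)
qed

lemma two_ne_zero_if_odd_card:
  assumes "odd (card (UNIV :: 'a::{field,finite} set))"
  shows "(2::'a) \<noteq> 0"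
proof
  assume "(2::'a) = 0"
  then have "CHAR('a) dvd 2" using of_nat_eq_0_iff_char_dvd[where 'a='a, of 2] by simp
  then have "CHAR('a) = 2" using prime_CHAR_finite_field[where 'a='a] by (simp add: primes_dvd_imp_eq)
  with CHAR_dvd_CARD[where 'a='a] assms show False by simp
qed

lemma scaling_in_Gq_of_binomial_perms:
  fixes f :: "'a::{field,finite} \<Rightarrow> 'a"
  assumes f: "restrict f Fstar \<in> binomial_perms"
    and wf: "restrict (\<lambda>c. w * f c) Fstar \<in> binomial_perms"
  shows "restrict (\<lambda>c. w * c) Fstar \<in> Gq"
proof -
  let ?G = "BijGroup (Fstar :: 'a set)"
  let ?F = "restrict f Fstar"
  let ?H = "restrict (\<lambda>c. w * f c) Fstar"
  let ?I = "restrict (inv_into Fstar ?F) Fstar"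
  have F: "?F \<in> Bij Fstar" and H: "?H \<in> Bij Fstar"
    using f wf unfolding binomial_perms_def by auto
  have I: "?I \<in> Bij Fstar" by (rule restrict_inv_into_Bij[OF F])
  have "?H \<otimes>\<^bsub>?G\<^esub> inv\<^bsub>?G\<^esub> ?F \<in> Gq"
    unfolding Gq_def by (intro generate.eng generate.incl generate.inv f wf)
  also have "inv\<^bsub>?G\<^esub> ?F = ?I" by (rule inv_BijGroup[OF F])
  also have "?H \<otimes>\<^bsub>?G\<^esub> ?I = compose Fstar ?H ?I"
    using H I by (simp add: BijGroup_def)
  also have "compose Fstar ?H ?I = restrict (\<lambda>c. w * c) Fstar"
  proof
    fix x :: 'a
    show "compose Fstar ?H ?I x = restrict (\<lambda>c. w * c) Fstar x"
    proof (cases "x \<in> Fstar")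
      case True
      have "?F ` Fstar = Fstar" using F unfolding Bij_def bij_betw_def by auto
      with True have "?F (inv_into Fstar ?F x) = x" by (intro f_inv_into_f) auto
      moreover have "inv_into Fstar ?F x \<in> Fstar" by (rule Bij_inv_into_mem[OF F True])
      ultimately show ?thesis using True by (simp add: compose_def)
    qed (simp add: compose_def)
  qed
  finally show ?thesis .
qed

lemma binomial_in_binomial_perms:
  fixes a b :: "'a::{field,finite}"
  assumes "a \<noteq> 0" "b \<noteq> 0" "0 < m" "m < n" "n < card (UNIV :: 'a set)"
    and "\<And>x. x \<noteq> 0 \<Longrightarrow> a * x ^ m + b * x ^ n \<noteq> 0"
    and "inj_on (\<lambda>x. a * x ^ m + b * x ^ n) Fstar"
  shows "restrict (\<lambda>x. a * x ^ m + b * x ^ n) Fstar \<in> binomial_perms"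
proof -
  have "restrict (\<lambda>x. a * x ^ m + b * x ^ n) Fstar \<in> Bij Fstar"
    using assms(6,7) by (rule restrict_in_Bij_FstarI)
  with assms(1-5) show ?thesis unfolding binomial_perms_def by auto
qed

lemma scaling_in_Gq_of_permutation_binomial:
  fixes w a b :: "'a::{field,finite}"
  assumes "w \<noteq> 0" "a \<noteq> 0" "b \<noteq> 0" "0 < m" "m < n" "n < card (UNIV :: 'a set)"
    and nonzero: "\<And>x. x \<noteq> 0 \<Longrightarrow> a * x ^ m + b * x ^ n \<noteq> 0"
    and inj: "inj_on (\<lambda>x. a * x ^ m + b * x ^ n) Fstar"
  shows "restrict (\<lambda>c. w * c) Fstar \<in> Gq"
proof (rule scaling_in_Gq_of_binomial_perms)
  show "restrict (\<lambda>x. a * x ^ m + b * x ^ n) Fstar \<in> binomial_perms"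
    by (rule binomial_in_binomial_perms) (use assms in auto)
  have scaled: "w * (a * x ^ m + b * x ^ n) = (w * a) * x ^ m + (w * b) * x ^ n" for x
    by (simp add: algebra_simps)
  have "restrict (\<lambda>x. (w * a) * x ^ m + (w * b) * x ^ n) Fstar \<in> binomial_perms"
  proof (rule binomial_in_binomial_perms)
    show "inj_on (\<lambda>x. w * a * x ^ m + w * b * x ^ n) Fstar"
      using inj \<open>w \<noteq> 0\<close> unfolding inj_on_def scaled[symmetric] by simp
    show "w * a * x ^ m + w * b * x ^ n \<noteq> 0" if "x \<noteq> 0" for x
      using nonzero[OF that] \<open>w \<noteq> 0\<close> by (simp only: scaled[symmetric] mult_eq_0_iff) simp
  qed (use assms in simp_all)
  then show "restrict (\<lambda>x. w * (a * x ^ m + b * x ^ n)) Fstar \<in> binomial_perms"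
    by (simp only: scaled)
qed

lemma inj_additive_no_nonzero_root:
  fixes f :: "'a::ab_group_add \<Rightarrow> 'b::ab_group_add"
  assumes "\<And>x y. f (x + y) = f x + f y" and "\<And>x. x \<noteq> 0 \<Longrightarrow> f x \<noteq> 0"
  shows "inj f"
proof (rule injI)
  fix x y assume "f x = f y"
  moreover have "f x = f (x - y) + f y" using assms(1)[of "x - y" y] by simp
  ultimately have "f (x - y) = 0" by simp
  with assms(2) have "x - y = 0" by blast
  then show "x = y" by simp
qed

lemma diff_one_dvd_power_diff_one: "(e::nat) - 1 dvd e ^ r - 1"
proof (cases "e = 0")
  case True
  then show ?thesis by (cases r) simp_all
next
  case False
  then have "[e = 1] (mod e - 1)" by (simp add: cong_def le_mod_geq)
  then have "[e ^ r = 1] (mod e - 1)" using cong_pow by fastforce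
  then show ?thesis by (rule cong_to_1_nat)
qed

lemma scaling_in_Gq_linearized:
  fixes w :: "'a::{field,finite}"
  assumes "is_generator w" and q: "card (UNIV :: 'a set) = CHAR('a) ^ k"
    and "d dvd k" "d < k" "2 < CHAR('a) ^ d"
  shows "restrict (\<lambda>c. w * c) Fstar \<in> Gq"
proof -
  define e where "e = CHAR('a) ^ d"
  define f where "f = (\<lambda>x::'a. (- w) * x ^ 1 + 1 * x ^ e)"
  have "e < card (UNIV :: 'a set)"
    unfolding e_def q using assms(4) prime_gt_1_nat[OF prime_CHAR_finite_field[where 'a='a]] by simp
  obtain r where "k = d * r" using assms(3) by blast
  then have "e - 1 dvd card (UNIV :: 'a set) - 1"
    using diff_one_dvd_power_diff_one[of e r] by (simp add: q e_def power_mult)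
  have "2 < e" using assms(5) by (simp add: e_def)
  have nonzero: "f x \<noteq> 0" if "x \<noteq> 0" for x
  proof
    assume "f x = 0"
    moreover have "x ^ e = x * x ^ (e - 1)" using \<open>2 < e\<close> by (cases e) simp_all
    ultimately have "x * (x ^ (e - 1) - w) = 0" unfolding f_def by (simp add: algebra_simps)
    with that have "w = x ^ (e - 1)" by simp
    moreover have "1 < e - 1" using \<open>2 < e\<close> by simp
    ultimately show False using is_generator_not_power[OF assms(1) \<open>e - 1 dvd _\<close>] by blast
  qed
  have "f (x + y) = f x + f y" for x y
    using freshmans_dream'[OF prime_CHAR_finite_field e_def] by (simp add: f_def algebra_simps)
  then have "inj f" using nonzero by (rule inj_additive_no_nonzero_root)
  then have "inj_on f Fstar" by (rule inj_on_subset) simp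
  moreover have "w \<noteq> 0" using assms(1) by (simp add: is_generator_def)
  ultimately show ?thesis
    using nonzero \<open>2 < e\<close> \<open>e < _\<close> unfolding f_def
    by (intro scaling_in_Gq_of_permutation_binomial[of w "- w" 1 1 e]) auto
qed

lemma scaling_in_Gq_composite_degree:
  fixes w :: "'a::{field,finite}"
  assumes "is_generator w" and "card (UNIV :: 'a set) = CHAR('a) ^ k"
    and "\<not> prime k" and "1 < k"
  shows "restrict (\<lambda>c. w * c) Fstar \<in> Gq"
proof -
  obtain d where "d dvd k" "d \<noteq> 1" "d \<noteq> k"
    using assms(3,4) unfolding prime_nat_iff by auto
  moreover from this have "1 < d" "d < k" using assms(4) by (auto dest: dvd_imp_le)
  moreover have "2 < CHAR('a) ^ d"
  proof -
    have "(2::nat) ^ 1 < 2 ^ d" using \<open>1 < d\<close> by (intro power_strict_increasing) auto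
    also have "\<dots> \<le> CHAR('a) ^ d" using prime_ge_2_nat[OF prime_CHAR_finite_field[where 'a='a]] by (rule power_mono) simp
    finally show ?thesis by simp
  qed
  ultimately show ?thesis using scaling_in_Gq_linearized[OF assms(1,2)] by blast
qed

lemma power_half_card_eq_pm1:
  fixes x :: "'a::{field,finite}"
  assumes "card (UNIV :: 'a set) - 1 = 2 * h" and "x \<noteq> 0"
  shows "x ^ h = 1 \<or> x ^ h = -1"
proof -
  have "(x ^ h) ^ 2 = x ^ (card (UNIV :: 'a set) - 1)"
    unfolding assms(1) by (simp add: mult.commute flip: power_mult)
  also have "\<dots> = 1" by (rule power_card_minus_one_eq_one[OF assms(2)])
  finally show ?thesis by (simp add: power2_eq_1_iff)
qed

lemma square_ratio_ne_pm1:
  fixes a s :: "'a::field"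
  assumes "(2::'a) \<noteq> 0" and "s \<noteq> 0" and "a + 1 = s\<^sup>2 * (a - 1)"
  shows "a \<noteq> 1" and "a \<noteq> -1"
proof -
  show "a \<noteq> 1" using assms(1,3) by auto
  show "a \<noteq> -1"
  proof
    assume "a = -1"
    with assms(3) have "s\<^sup>2 * 2 = 0" by (simp add: algebra_simps)
    with assms(1,2) show False by simp
  qed
qed

lemma add_power_half_ne_zero:
  fixes a x :: "'a::{field,finite}"
  assumes "card (UNIV :: 'a set) - 1 = 2 * h" and "a \<noteq> 1" and "a \<noteq> -1" and "x \<noteq> 0"
  shows "a + x ^ h \<noteq> 0"
  using power_half_card_eq_pm1[OF assms(1,4)] assms(2,3) by (auto simp: add_eq_0_iff2)

lemma half_binomial_nonzero:
  fixes a x :: "'a::{field,finite}"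
  assumes "card (UNIV :: 'a set) - 1 = 2 * h" and "a \<noteq> 1" and "a \<noteq> -1" and "x \<noteq> 0"
  shows "a * x + x ^ (h + 1) \<noteq> 0"
proof -
  have "a * x + x ^ (h + 1) = x * (a + x ^ h)" by (simp add: algebra_simps)
  with add_power_half_ne_zero[OF assms] assms(4) show ?thesis by simp
qed

lemma power_half_eq_if_cross_eq:
  fixes a s u v :: "'a::{field,finite}"
  assumes h: "card (UNIV :: 'a set) - 1 = 2 * h" and "s \<noteq> 0" and "a \<noteq> 1"
    and a: "a + 1 = s\<^sup>2 * (a - 1)" and "u * (a + 1) = v * (a - 1)"
  shows "v ^ h = u ^ h"
proof -
  have "v * (a - 1) = u * (a + 1)" using assms(5) by simp
  also have "\<dots> = (u * s\<^sup>2) * (a - 1)" by (simp only: a mult.assoc)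
  finally have "v * (a - 1) = (u * s\<^sup>2) * (a - 1)" .
  moreover have "a - 1 \<noteq> 0" using assms(3) by simp
  ultimately have "v = u * s\<^sup>2" by (metis mult_cancel_right)
  then have "v ^ h = u ^ h * s ^ (2 * h)" by (simp add: power_mult_distrib flip: power_mult)
  also have "s ^ (2 * h) = 1" using power_card_minus_one_eq_one[OF \<open>s \<noteq> 0\<close>] by (simp only: h)
  finally show ?thesis by simp
qed

lemma half_binomial_inj_on:
  fixes a s :: "'a::{field,finite}"
  assumes h: "card (UNIV :: 'a set) - 1 = 2 * h" and "(2::'a) \<noteq> 0" and "s \<noteq> 0"
    and a: "a + 1 = s\<^sup>2 * (a - 1)"
  shows "inj_on (\<lambda>x. a * x + x ^ (h + 1)) Fstar"
proof (rule inj_onI)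
  note a_ne = square_ratio_ne_pm1[OF assms(2-4)]
  fix x y :: 'a assume "x \<in> Fstar" "y \<in> Fstar" and "a * x + x ^ (h + 1) = a * y + y ^ (h + 1)"
  then have x0: "x \<noteq> 0" and y0: "y \<noteq> 0" and xy: "x * (a + x ^ h) = y * (a + y ^ h)"
    by (simp_all add: algebra_simps)
  note swap = power_half_eq_if_cross_eq[OF h \<open>s \<noteq> 0\<close> a_ne(1) a]
  have "x ^ h = y ^ h"
  proof (rule ccontr)
    assume ne: "x ^ h \<noteq> y ^ h"
    consider "x ^ h = 1" "y ^ h = -1" | "x ^ h = -1" "y ^ h = 1"
      using power_half_card_eq_pm1[OF h x0] power_half_card_eq_pm1[OF h y0] ne by auto
    then show False
    proof cases
      case 1
      with xy have "x * (a + 1) = y * (a - 1)" by simp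
      with swap ne show False by metis
    next
      case 2
      with xy have "y * (a + 1) = x * (a - 1)" by simp
      with swap ne show False by metis
    qed
  qed
  with xy have "x * (a + x ^ h) = y * (a + x ^ h)" by simp
  with add_power_half_ne_zero[OF h a_ne x0] show "x = y" by simp
qed

lemma scaling_in_Gq_odd:
  fixes w :: "'a::{field,finite}"
  assumes "is_generator w" and odd: "odd (card (UNIV :: 'a set))"
    and "card (UNIV :: 'a set) > 5"
  shows "restrict (\<lambda>c. w * c) Fstar \<in> Gq"
proof -
  have "even (card (UNIV :: 'a set) - 1)" using odd assms(3) by simp
  then obtain h where h: "card (UNIV :: 'a set) - 1 = 2 * h" by (elim evenE)
  have "(2::'a) \<noteq> 0" using odd by (rule two_ne_zero_if_odd_card)
  have "w \<noteq> 0" using assms(1) by (simp add: is_generator_def)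
  have "w ^ 2 \<noteq> 1" using is_generator_order_le[OF assms(1), of 2] assms(3) by auto
  have "w ^ 2 \<noteq> -1"
  proof
    assume "w ^ 2 = -1"
    have "w ^ 4 = (w ^ 2) ^ 2" by (simp flip: power_mult)
    also have "\<dots> = 1" using \<open>w ^ 2 = -1\<close> by simp
    finally have "w ^ 4 = 1" .
    with is_generator_order_le[OF assms(1), of 4] assms(3) show False by simp
  qed
  define a where "a = (w ^ 2 + 1) / (w ^ 2 - 1)"
  have a: "a + 1 = (w ^ 2) * (a - 1)"
    using \<open>w ^ 2 \<noteq> 1\<close> by (simp add: a_def field_simps)
  have "a \<noteq> 0"
    using \<open>w ^ 2 \<noteq> 1\<close> \<open>w ^ 2 \<noteq> -1\<close> by (simp add: a_def add_eq_0_iff2)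
  note a_ne = square_ratio_ne_pm1[OF \<open>2 \<noteq> 0\<close> \<open>w \<noteq> 0\<close> a]
  show ?thesis
  proof (rule scaling_in_Gq_of_permutation_binomial[of w a 1 1 "h + 1"])
    show "a * x ^ 1 + 1 * x ^ (h + 1) \<noteq> 0" if "x \<noteq> 0" for x
      using half_binomial_nonzero[OF h a_ne that] by simp
    show "inj_on (\<lambda>x. a * x ^ 1 + 1 * x ^ (h + 1)) Fstar"
      using half_binomial_inj_on[OF h \<open>2 \<noteq> 0\<close> \<open>w \<noteq> 0\<close> a] by simp
  qed (use h assms(3) \<open>w \<noteq> 0\<close> \<open>a \<noteq> 0\<close> in auto)
qed

lemma funpow_times_left: "((\<lambda>x. w * x) ^^ k) c = w ^ k * (c::'a::monoid_mult)"
  by (induction k) (simp_all add: mult.assoc)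

lemma orbit_of_generator:
  fixes w :: "'a::{field,finite}"
  assumes "is_generator w" and "c \<in> Fstar"
  shows "{((\<lambda>x. w * x) ^^ k) c | k. True} = Fstar"
proof
  show "{((\<lambda>x. w * x) ^^ k) c | k. True} \<subseteq> Fstar"
    using assms by (auto simp: funpow_times_left is_generator_def)
  show "Fstar \<subseteq> {((\<lambda>x. w * x) ^^ k) c | k. True}"
  proof
    fix y :: 'a assume "y \<in> Fstar"
    with assms have "y / c \<in> {w ^ k | k. True}" unfolding is_generator_def by simp
    then obtain k where "y / c = w ^ k" by blast
    with assms(2) have "y = w ^ k * c" by (simp add: field_simps)
    then show "y \<in> {((\<lambda>x. w * x) ^^ k) c | k. True}" unfolding funpow_times_left by blast
  qed
qed

theorem corollary4p2:
  fixes w :: "'a::{field,finite}"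
  assumes "\<exists>p k. prime (p::nat) \<and> 0 < k \<and> card (UNIV :: 'a set) = p ^ k"
    and "card (UNIV :: 'a set) > 5"
    and "\<not> (\<exists>p. prime (p::nat) \<and> card (UNIV :: 'a set) = 2 ^ p)"
    and "is_generator w"
  shows "restrict (\<lambda>c. w * c) Fstar \<in> Gq
    \<and> (\<forall>c \<in> Fstar. {((\<lambda>x. w * x) ^^ k) c | k. True} = Fstar)
    \<and> card (Fstar :: 'a set) = card (UNIV :: 'a set) - 1"
proof -
  obtain p k where p: "prime p" and q: "card (UNIV :: 'a set) = p ^ k"
    using assms(1) by blast
  have CHAR: "CHAR('a) = p" by (rule CHAR_eq_of_card_eq_prime_power[OF p q])
  have "restrict (\<lambda>c. w * c) Fstar \<in> Gq"
  proof (cases "p = 2")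
    case True
    with assms(3) q have "\<not> prime k" by auto
    have "(2::nat) ^ 1 < 2 ^ k" using assms(2) q True by simp
    then have "1 < k" by (rule power_less_imp_less_exp[rotated]) simp
    with \<open>\<not> prime k\<close> show ?thesis
      using scaling_in_Gq_composite_degree[OF assms(4)] q CHAR by simp
  next
    case False
    with p have "odd p" using prime_ge_2_nat[OF p] by (intro prime_odd_nat) auto
    with q have "odd (card (UNIV :: 'a set))" by simp
    with assms(2,4) show ?thesis by (intro scaling_in_Gq_odd)
  qed
  with orbit_of_generator[OF assms(4)] card_Fstar show ?thesis by blast
qed

end
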